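(* Let $m$ be a positive integer, let $\mathcal{N}_r$ be the gadget of size $m$, and let $\pi$ be an $\mathcal{H}^{(\ast)}$-partition of $\mathcal{N}_r$. Then for every $P\in\pi$, the Hamiltonian path of the induced subgraph $\mathcal{N}_r[P]$ has either all its arcs in $\swarrow_r$ or all its arcs in $\searrow_r$.
   Context: The gadget $\mathcal{N}_r=\langle\mathcal{V}_r,\mathcal{E}_r\rangle$ of size $m$ has vertex set $\mathcal{V}_r=\{r_{i,j}:0\le i,j\le m\}$ and arc set $\mathcal{E}_r=\swarrow_r\cup\searrow_r$, where $\swarrow_r=\{\langle r_{i,j},r_{i,j+1}\rangle:0\le i\le m,\ 0\le j<m\}$ and $\searrow_r=\{\langle r_{i,j},r_{i+1,j}\rangle:0\le i<m,\ 0\le j\le m\}$; it is a DAG. For a digraph $G$ and a subset $V_1$ of its vertices, $G[V_1]$ is the induced subgraph. A partition $\pi$ of the vertex set of a DAG $G$ is an $\mathcal{H}^{(\ast)}$-partition if every induced subgraph $G[P]$, $P\in\pi$, has a directed Hamiltonian path (which in a DAG is unique) and the quotient digraph $G/\pi$ (vertex set $\pi$, arc $\langle P,Q\rangle$ for $P\ne Q$ whenever some arc of $G$ goes from $P$ to $Q$) is acyclic. *)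

theory Defs
  imports Main "HOL-Library.Disjoint_Sets"
begin

definition gadget_V :: "nat \<Rightarrow> (nat \<times> nat) set" where
  "gadget_V m = {(i, j). i \<le> m \<and> j \<le> m}"

definition gadget_SW :: "nat \<Rightarrow> ((nat \<times> nat) \<times> (nat \<times> nat)) set" where
  "gadget_SW m = {((i, j), (i, j + 1)) | i j. i \<le> m \<and> j < m}"

definition gadget_SE :: "nat \<Rightarrow> ((nat \<times> nat) \<times> (nat \<times> nat)) set" where
  "gadget_SE m = {((i, j), (i + 1, j)) | i j. i < m \<and> j \<le> m}"

definition gadget_E :: "nat \<Rightarrow> ((nat \<times> nat) \<times> (nat \<times> nat)) set" where
  "gadget_E m = gadget_SW m \<union> gadget_SE m"

definition path_arcs :: "'a list \<Rightarrow> ('a \<times> 'a) set" where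
  "path_arcs xs = set (zip xs (tl xs))"

definition is_ham_path :: "('a \<times> 'a) set \<Rightarrow> 'a set \<Rightarrow> 'a list \<Rightarrow> bool" where
  "is_ham_path E P xs \<longleftrightarrow> distinct xs \<and> set xs = P \<and> path_arcs xs \<subseteq> E"

definition quotient_arcs :: "('a \<times> 'a) set \<Rightarrow> 'a set set \<Rightarrow> ('a set \<times> 'a set) set" where
  "quotient_arcs E \<pi> = {(P, Q). P \<in> \<pi> \<and> Q \<in> \<pi> \<and> P \<noteq> Q \<and> (\<exists>u\<in>P. \<exists>v\<in>Q. (u, v) \<in> E)}"

definition H_star_partition :: "'a set \<Rightarrow> ('a \<times> 'a) set \<Rightarrow> 'a set set \<Rightarrow> bool" where
  "H_star_partition V E \<pi> \<longleftrightarrow>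
     partition_on V \<pi> \<and>
     (\<forall>P\<in>\<pi>. \<exists>xs. is_ham_path E P xs) \<and>
     acyclic (quotient_arcs E \<pi>)"

end

theory Submission
  imports Defs
begin

text \<open>A path in the gadget climbs the anti-diagonals \<open>i + j\<close> one step per arc, so it meets each
  anti-diagonal at most once. If a Hamiltonian path of a part \<open>P\<close> switched direction at a vertex
  \<open>v\<close>, the opposite corner \<open>x\<close> of the unit square around \<open>v\<close> lies on the same anti-diagonal as \<open>v\<close>,
  hence outside \<open>P\<close>; the detour through \<open>x\<close> leaves \<open>P\<close> and re-enters it, a cycle in the quotient.\<close>

lemma path_arcs_Cons_Cons [simp]: "path_arcs (a # b # ys) = insert (a, b) (path_arcs (b # ys))"
  by (simp add: path_arcs_def)

lemma path_arcs_Nil [simp]: "path_arcs [] = {}"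
  by (simp add: path_arcs_def)

lemma path_arcs_singleton [simp]: "path_arcs [a] = {}"
  by (simp add: path_arcs_def)

lemma path_rank_nth:
  assumes "path_arcs xs \<subseteq> {(a, b). f b = Suc (f a)}" and "k < length xs"
  shows "f (xs ! k) = f (hd xs) + k"
  using assms
proof (induction xs arbitrary: k rule: induct_list012)
  case (3 a b ys)
  then show ?case by (cases k) auto
qed auto

lemma path_rank_inj_on:
  assumes "path_arcs xs \<subseteq> {(a, b). f b = Suc (f a)}"
  shows "inj_on f (set xs)"
proof (rule inj_onI)
  fix x y assume "x \<in> set xs" "y \<in> set xs" "f x = f y"
  then obtain k l where "k < length xs" "x = xs ! k" "l < length xs" "y = xs ! l"
    by (auto simp: in_set_conv_nth)
  with \<open>f x = f y\<close> show "x = y"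
    using path_rank_nth[OF assms] by auto
qed

lemma path_arcs_direction_switch:
  assumes "path_arcs xs \<subseteq> A \<union> B" "\<not> path_arcs xs \<subseteq> A" "\<not> path_arcs xs \<subseteq> B"
  shows "\<exists>ys u v w zs. xs = ys @ u # v # w # zs \<and>
           ((u, v) \<in> A \<and> (v, w) \<in> B \<or> (u, v) \<in> B \<and> (v, w) \<in> A)"
  using assms
proof (induction xs rule: induct_list012)
  case (3 a b ys)
  show ?case
  proof (cases "path_arcs (b # ys) \<subseteq> A \<or> path_arcs (b # ys) \<subseteq> B")
    case False
    moreover have "path_arcs (b # ys) \<subseteq> A \<union> B"
      using "3.prems"(1) by simp
    ultimately obtain ys' u v w zs where "b # ys = ys' @ u # v # w # zs"
      and "(u, v) \<in> A \<and> (v, w) \<in> B \<or> (u, v) \<in> B \<and> (v, w) \<in> A"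
      using "3.IH"(2) by blast
    then have "a # b # ys = (a # ys') @ u # v # w # zs \<and>
        ((u, v) \<in> A \<and> (v, w) \<in> B \<or> (u, v) \<in> B \<and> (v, w) \<in> A)"
      by simp
    then show ?thesis by blast
  next
    case True
    then obtain c zs where ys: "ys = c # zs"
      using "3.prems" by (cases ys) auto
    with True "3.prems" have "(a, b) \<in> A \<and> (b, c) \<in> B \<or> (a, b) \<in> B \<and> (b, c) \<in> A"
      by auto
    then have "a # b # ys = [] @ a # b # c # zs \<and>
        ((a, b) \<in> A \<and> (b, c) \<in> B \<or> (a, b) \<in> B \<and> (b, c) \<in> A)"
      using ys by simp
    then show ?thesis by blast
  qed
qed simp_all

definition gadget_level :: "nat \<times> nat \<Rightarrow> nat" where
  "gadget_level v = fst v + snd v"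

lemma gadget_E_level: "gadget_E m \<subseteq> {(a, b). gadget_level b = Suc (gadget_level a)}"
  by (auto simp: gadget_E_def gadget_SW_def gadget_SE_def gadget_level_def)

lemma gadget_E_subset_V: "gadget_E m \<subseteq> gadget_V m \<times> gadget_V m"
  by (auto simp: gadget_E_def gadget_SW_def gadget_SE_def gadget_V_def)

lemma gadget_turn_opposite_corner:
  assumes "(u, v) \<in> gadget_SW m \<and> (v, w) \<in> gadget_SE m \<or> (u, v) \<in> gadget_SE m \<and> (v, w) \<in> gadget_SW m"
  shows "\<exists>x. (u, x) \<in> gadget_E m \<and> (x, w) \<in> gadget_E m \<and> x \<noteq> v \<and> gadget_level x = gadget_level v"
proof -
  \<comment> \<open>\<open>u + (w - v)\<close>: take the second step of the turn first\<close>
  let ?x = "(fst w - fst v + fst u, snd w - snd v + snd u)"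
  from assms have "(u, ?x) \<in> gadget_E m \<and> (?x, w) \<in> gadget_E m \<and> ?x \<noteq> v \<and> gadget_level ?x = gadget_level v"
    by (auto simp: gadget_E_def gadget_SW_def gadget_SE_def gadget_level_def)
  then show ?thesis ..
qed

lemma quotient_arcs_not_acyclic_if_detour:
  assumes "partition_on V \<pi>" "P \<in> \<pi>" "u \<in> P" "w \<in> P" "x \<in> V" "x \<notin> P"
    and "(u, x) \<in> E" "(x, w) \<in> E"
  shows "\<not> acyclic (quotient_arcs E \<pi>)"
proof -
  obtain Q where "Q \<in> \<pi>" "x \<in> Q"
    using assms(1,5) by (auto simp: partition_on_def)
  with assms have "(P, Q) \<in> quotient_arcs E \<pi>" "(Q, P) \<in> quotient_arcs E \<pi>"
    unfolding quotient_arcs_def by blast+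
  then have "(P, P) \<in> (quotient_arcs E \<pi>)\<^sup>+"
    by (meson trancl.r_into_trancl trancl_into_trancl)
  then show ?thesis
    unfolding acyclic_def by blast
qed

theorem lemma5p2:
  fixes m :: nat and \<pi> :: "(nat \<times> nat) set set"
  assumes "0 < m"
    and "H_star_partition (gadget_V m) (gadget_E m) \<pi>"
  shows "\<forall>P\<in>\<pi>. \<forall>xs. is_ham_path (gadget_E m) P xs \<longrightarrow>
           path_arcs xs \<subseteq> gadget_SW m \<or> path_arcs xs \<subseteq> gadget_SE m"
proof (intro ballI allI impI)
  fix P xs
  assume "P \<in> \<pi>" and "is_ham_path (gadget_E m) P xs"
  then have arcs: "path_arcs xs \<subseteq> gadget_E m" and P: "set xs = P"
    by (auto simp: is_ham_path_def)
  have partition: "partition_on (gadget_V m) \<pi>" and acyclic: "acyclic (quotient_arcs (gadget_E m) \<pi>)"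
    using assms(2) by (simp_all add: H_star_partition_def)
  have arcs_SW_SE: "path_arcs xs \<subseteq> gadget_SW m \<union> gadget_SE m"
    using arcs by (simp add: gadget_E_def)
  have level_inj: "inj_on gadget_level (set xs)"
    using path_rank_inj_on subset_trans[OF arcs gadget_E_level] .
  show "path_arcs xs \<subseteq> gadget_SW m \<or> path_arcs xs \<subseteq> gadget_SE m"
  proof (rule ccontr)
    assume "\<not> ?thesis"
    then obtain ys u v w zs where xs: "xs = ys @ u # v # w # zs"
      and turn: "(u, v) \<in> gadget_SW m \<and> (v, w) \<in> gadget_SE m \<or> (u, v) \<in> gadget_SE m \<and> (v, w) \<in> gadget_SW m"
      using path_arcs_direction_switch[OF arcs_SW_SE] by blast
    obtain x where ux: "(u, x) \<in> gadget_E m" and xw: "(x, w) \<in> gadget_E m"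
      and "x \<noteq> v" and level: "gadget_level x = gadget_level v"
      using gadget_turn_opposite_corner[OF turn] by blast
    have "v \<in> set xs" and u: "u \<in> P" and w: "w \<in> P"
      using P xs by auto
    then have "x \<notin> P"
      using inj_onD[OF level_inj level] \<open>x \<noteq> v\<close> P by blast
    moreover have "x \<in> gadget_V m"
      using ux gadget_E_subset_V by blast
    ultimately show False
      using quotient_arcs_not_acyclic_if_detour[OF partition \<open>P \<in> \<pi>\<close> u w _ _ ux xw] acyclic
      by blast
  qed
qed

end
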